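(* Let $n\ge1$, let $A_0,A_1\subseteq2^{<\omega}$, and let $C$ be $n$-fair for $A_0,A_1$. Let $(F,X)$ be a Mathias condition with $X$ $C$-computable. Let $m\ge1$, let $\varphi(G,U)$ be an $m$-by-$2^nm$ formula which is $\Sigma^0_1$ relative to $C$ and has an additional set parameter $G$, and let $M$ be an $m$-by-$2^nm$ disjoint matrix. Then there is a Mathias condition $(E,Y)$ extending $(F,X)$, with $Y$ $C$-computable, such that at least one of the following holds: (a) for every set $G$ satisfying $(E,Y)$, the formula $\varphi(G,U)$ is not essential in $M$; (b) $\varphi(E,V)$ holds for some $M$-valuation $V$ diagonalizing against $A_0,A_1$.
   Context: Mathias conditions. A Mathias condition is a pair $(F,X)$ with $F$ finite, $X$ infinite, and $\max F<\min X$. A condition $(E,Y)$ extends $(F,X)$ if $F\subseteq E$, $Y\subseteq X$, and $E\setminus F\subseteq X$. A set $G$ satisfies $(F,X)$ if $F\subseteq G$ and $G\setminus F\subseteq X$. Strings are finite binary strings, and $\preceq$ is the prefix relation. Two strings are incomparable if neither is a prefix of the other. Matrices. An $m$-by-$n$ matrix $M$ is an array of strings $\sigma_{i,j}$ ($i<m$, $j<n$), with rows $M(i)=(\sigma_{i,0},\dots,\sigma_{i,n-1})$. It is disjoint if each row consists of pairwise incomparable strings. Formulas. An $m$-by-$n$ formula is a formula with distinguished finite-set variables $U_{i,j}$. It is $\Sigma^{0,X}_1$ if it is $\Sigma^0_1$ relative to $X$. Valuations. An $M$-valuation is a tuple $V=(B_{i,j})$ of finite sets $B_{i,j}\subseteq\{\tau:\tau\succeq\sigma_{i,j}\}$.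 We write $\varphi(V)$ for $\varphi$ evaluated at $U_{i,j}:=B_{i,j}$, and $V(i)=(B_{i,0},\dots,B_{i,n-1})$. We write $V>s$ if all strings occurring in $V$ have length $>s$. Essential. $\varphi$ is essential in $M$ if for every $s$ there is an $M$-valuation $V>s$ with $\varphi(V)$. Diagonalization. An $M$-valuation $V$ diagonalizes against $A_0,A_1$ if for every $i<m$ there are components $L,R$ of $V(i)$ with $L\subseteq A_0$ and $R\subseteq A_1$. Fairness. For $n\ge1$, a set $X$ is $n$-fair for $A_0,A_1$ if the following holds: for every $m$, every $\Sigma^{0,X}_1$ $m$-by-$2^nm$ formula $\varphi$, and every $m$-by-$2^nm$ disjoint matrix $M$ in which $\varphi$ is essential, there is an $M$-valuation $V$ diagonalizing against $A_0,A_1$ with $\varphi(V)$. *)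

theory Defs
  imports Main "HOL-Library.Nat_Bijection" "HOL-Library.Sublist"
begin

datatype recf =
    Zero
  | Succ
  | Proj nat
  | Orc
  | Comp recf "recf list"
  | Prim recf recf
  | Mn recf

definition arg :: "nat \<Rightarrow> nat list \<Rightarrow> nat" where
  "arg i xs = (if i < length xs then xs ! i else 0)"

inductive eval :: "nat set \<Rightarrow> recf \<Rightarrow> nat list \<Rightarrow> nat \<Rightarrow> bool" for Or :: "nat set" where
  eval_Zero: "eval Or Zero xs 0"
| eval_Succ: "eval Or Succ xs (Suc (arg 0 xs))"
| eval_Proj: "eval Or (Proj i) xs (arg i xs)"
| eval_Orc: "eval Or Orc xs (if arg 0 xs \<in> Or then 1 else 0)"
| eval_Comp: "\<lbrakk> length ys = length gs; \<forall>k < length gs. eval Or (gs ! k) xs (ys ! k);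
                eval Or f ys z \<rbrakk> \<Longrightarrow> eval Or (Comp f gs) xs z"
| eval_Prim0: "eval Or f xs y \<Longrightarrow> eval Or (Prim f g) (0 # xs) y"
| eval_PrimS: "\<lbrakk> eval Or (Prim f g) (k # xs) y; eval Or g (k # y # xs) z \<rbrakk>
                \<Longrightarrow> eval Or (Prim f g) (Suc k # xs) z"
| eval_Mn: "\<lbrakk> eval Or f (k # xs) 0; \<forall>j < k. \<exists>y. eval Or f (j # xs) (Suc y) \<rbrakk>
                \<Longrightarrow> eval Or (Mn f) xs k"

definition join :: "nat set \<Rightarrow> nat set \<Rightarrow> nat set" where
  "join A B = {2 * x | x. x \<in> A} \<union> {2 * x + 1 | x. x \<in> B}"

definition computable_in :: "nat set \<Rightarrow> nat set \<Rightarrow> bool" where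
  "computable_in X C \<longleftrightarrow> (\<exists>f. \<forall>x. eval C f [x] (if x \<in> X then 1 else 0))"

type_synonym str = "bool list"

definition incomparable :: "str \<Rightarrow> str \<Rightarrow> bool" where
  "incomparable s t \<longleftrightarrow> \<not> prefix s t \<and> \<not> prefix t s"

text \<open>An m-by-n matrix is M :: nat => nat => str, with entries M i j for i<m, j<n.\<close>
type_synonym matrix = "nat \<Rightarrow> nat \<Rightarrow> str"
type_synonym valuation = "nat \<Rightarrow> nat \<Rightarrow> str set"

definition disjoint_matrix :: "nat \<Rightarrow> nat \<Rightarrow> matrix \<Rightarrow> bool" where
  "disjoint_matrix m n M \<longleftrightarrow>
     (\<forall>i<m. \<forall>j<n. \<forall>k<n. j \<noteq> k \<longrightarrow> incomparable (M i j) (M i k))"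

definition is_valuation :: "nat \<Rightarrow> nat \<Rightarrow> matrix \<Rightarrow> valuation \<Rightarrow> bool" where
  "is_valuation m n M V \<longleftrightarrow>
     (\<forall>i<m. \<forall>j<n. finite (V i j) \<and> V i j \<subseteq> {t. prefix (M i j) t})"

definition valuation_gt :: "nat \<Rightarrow> nat \<Rightarrow> valuation \<Rightarrow> nat \<Rightarrow> bool" where
  "valuation_gt m n V s \<longleftrightarrow> (\<forall>i<m. \<forall>j<n. \<forall>t \<in> V i j. length t > s)"

definition essential :: "nat \<Rightarrow> nat \<Rightarrow> matrix \<Rightarrow> (valuation \<Rightarrow> bool) \<Rightarrow> bool" where
  "essential m n M \<phi> \<longleftrightarrow>
     (\<forall>s. \<exists>V. is_valuation m n M V \<and> valuation_gt m n V s \<and> \<phi> V)"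

definition diagonalizes :: "nat \<Rightarrow> nat \<Rightarrow> valuation \<Rightarrow> str set \<Rightarrow> str set \<Rightarrow> bool" where
  "diagonalizes m n V A0 A1 \<longleftrightarrow>
     (\<forall>i<m. \<exists>L<n. \<exists>R<n. V i L \<subseteq> A0 \<and> V i R \<subseteq> A1)"

definition code_str :: "str \<Rightarrow> nat" where
  "code_str t = list_encode (map (\<lambda>b. if b then 1 else 0) t)"

definition code_val :: "nat \<Rightarrow> nat \<Rightarrow> valuation \<Rightarrow> nat" where
  "code_val m n V =
     list_encode (map (\<lambda>i. list_encode (map (\<lambda>j. set_encode (code_str ` V i j)) [0..<n])) [0..<m])"

definition finite_entries :: "nat \<Rightarrow> nat \<Rightarrow> valuation \<Rightarrow> bool" where
  "finite_entries m n V \<longleftrightarrow> (\<forall>i<m. \<forall>j<n. finite (V i j))"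

text \<open>An m-by-n formula (in the finite-set variables U_ij) that is Sigma^0_1 relative to Or:
  on (canonically coded) assignments of finite sets to the U_ij it is given by an
  Or-computably enumerable relation.\<close>
definition sigma1_formula :: "nat set \<Rightarrow> nat \<Rightarrow> nat \<Rightarrow> (valuation \<Rightarrow> bool) \<Rightarrow> bool" where
  "sigma1_formula Or m n \<phi> \<longleftrightarrow>
     (\<exists>f. \<forall>V. finite_entries m n V \<longrightarrow> (\<phi> V \<longleftrightarrow> (\<exists>y. eval Or f [code_val m n V] y)))"

text \<open>Same, with an additional set parameter G (Sigma^0_1 relative to Or, uniformly in G,
  i.e. enumerated by a single oracle program with oracle Or joined with G).\<close>
definition sigma1_formula_param ::
  "nat set \<Rightarrow> nat \<Rightarrow> nat \<Rightarrow> (nat set \<Rightarrow> valuation \<Rightarrow> bool) \<Rightarrow> bool" where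
  "sigma1_formula_param Or m n \<phi> \<longleftrightarrow>
     (\<exists>f. \<forall>G V. finite_entries m n V \<longrightarrow>
        (\<phi> G V \<longleftrightarrow> (\<exists>y. eval (join Or G) f [code_val m n V] y)))"

definition fair :: "nat \<Rightarrow> nat set \<Rightarrow> str set \<Rightarrow> str set \<Rightarrow> bool" where
  "fair n X A0 A1 \<longleftrightarrow>
     (\<forall>m (\<phi> :: valuation \<Rightarrow> bool) M.
        sigma1_formula X m (2 ^ n * m) \<phi> \<longrightarrow> disjoint_matrix m (2 ^ n * m) M \<longrightarrow>
        essential m (2 ^ n * m) M \<phi> \<longrightarrow>
        (\<exists>V. is_valuation m (2 ^ n * m) M V \<and> diagonalizes m (2 ^ n * m) V A0 A1 \<and> \<phi> V))"

definition mathias :: "nat set \<Rightarrow> nat set \<Rightarrow> bool" where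
  "mathias F X \<longleftrightarrow> finite F \<and> infinite X \<and> (\<forall>a\<in>F. \<forall>b\<in>X. a < b)"

definition mathias_ext :: "nat set \<Rightarrow> nat set \<Rightarrow> nat set \<Rightarrow> nat set \<Rightarrow> bool" where
  "mathias_ext E Y F X \<longleftrightarrow> F \<subseteq> E \<and> Y \<subseteq> X \<and> E - F \<subseteq> X"

definition satisfies :: "nat set \<Rightarrow> nat set \<Rightarrow> nat set \<Rightarrow> bool" where
  "satisfies G F X \<longleftrightarrow> F \<subseteq> G \<and> G - F \<subseteq> X"

end

theory Submission
  imports Defs
begin

text \<open>Replace \<open>\<phi>\<close> by \<open>\<psi>(V) :\<equiv> \<exists>E. \<phi>(E, V)\<close>, where \<open>E\<close> ranges over the finite sets
  \<open>F \<union> D\<close> with \<open>D \<subseteq> X\<close> finite. Since \<open>X\<close> is \<open>C\<close>-computable and halting with oracle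
  \<open>C \<oplus> E\<close> can be searched for uniformly in a code of \<open>E\<close>, \<open>\<psi>\<close> is again \<open>\<Sigma>\<^sup>0\<^sub>1\<close> relative
  to \<open>C\<close>. If \<open>\<psi>\<close> is essential in \<open>M\<close>, fairness of \<open>C\<close> yields a diagonalizing \<open>V\<close> with
  \<open>\<phi>(E, V)\<close> for one such \<open>E\<close>, and \<open>(E, {x \<in> X. x > max E})\<close> is the required extension.
  Otherwise some bound \<open>s\<close> witnesses that \<open>\<psi>\<close> is not essential; by the use principle any
  \<open>G\<close> satisfying \<open>(F, X)\<close> with \<open>\<phi>(G, V)\<close> already has \<open>\<phi>(E, V)\<close> for a finite part \<open>E\<close> of \<open>G\<close>,
  so \<open>\<phi>(G, -)\<close> is not essential either, and \<open>(F, X)\<close> itself is the required extension.\<close>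

lemma arg_simps [simp]: "arg 0 (x # xs) = x" "arg (Suc i) (x # xs) = arg i xs" "arg i [] = 0"
  by (auto simp: arg_def)

lemma arg_numeral [simp]: "arg (numeral k) (x # xs) = arg (pred_numeral k) xs"
  by (simp add: numeral_eq_Suc)

lemma eval_ZeroI: "y = 0 \<Longrightarrow> eval Q Zero xs y"
  using eval_Zero by simp

lemma eval_SuccI: "y = Suc (arg 0 xs) \<Longrightarrow> eval Q Succ xs y"
  using eval_Succ by simp

lemma eval_ProjI: "y = arg i xs \<Longrightarrow> eval Q (Proj i) xs y"
  using eval_Proj by simp

lemma eval_OrcI: "y = (if arg 0 xs \<in> Q then 1 else 0) \<Longrightarrow> eval Q Orc xs y"
  using eval_Orc by simp

lemma eval_Comp_list_all2:
  assumes "list_all2 (\<lambda>g y. eval Q g xs y) gs ys" "eval Q f ys z"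
  shows "eval Q (Comp f gs) xs z"
  using assms by (intro eval_Comp) (auto simp: list_all2_conv_all_nth)

lemma eval_Comp1: "eval Q g xs y \<Longrightarrow> eval Q f [y] z \<Longrightarrow> eval Q (Comp f [g]) xs z"
  by (rule eval_Comp_list_all2) auto

lemma eval_Comp2:
  "eval Q g1 xs y1 \<Longrightarrow> eval Q g2 xs y2 \<Longrightarrow> eval Q f [y1, y2] z \<Longrightarrow> eval Q (Comp f [g1, g2]) xs z"
  by (rule eval_Comp_list_all2) auto

lemma eval_Comp3:
  "eval Q g1 xs y1 \<Longrightarrow> eval Q g2 xs y2 \<Longrightarrow> eval Q g3 xs y3 \<Longrightarrow> eval Q f [y1, y2, y3] z \<Longrightarrow>
   eval Q (Comp f [g1, g2, g3]) xs z"
  by (rule eval_Comp_list_all2) auto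

lemma eval_Prim_rec_natI:
  assumes "eval Q f xs b" "\<And>j r. eval Q g (j # r # xs) (G j r)" "y = rec_nat b G k"
  shows "eval Q (Prim f g) (k # xs) y"
  unfolding assms(3)
proof (induction k)
  case 0 then show ?case using assms(1) by (simp add: eval_Prim0)
next
  case (Suc k) then show ?case using assms(2) eval_PrimS by simp
qed

lemma rec_nat_const_step: "rec_nat a (\<lambda>j r. h j) k = (case k of 0 \<Rightarrow> a | Suc j \<Rightarrow> h j)"
  by (cases k) auto

definition proj_range :: "nat \<Rightarrow> nat \<Rightarrow> recf list" where
  "proj_range k a = map Proj [k..<k + a]"

lemma eval_proj_range:
  assumes "length ys = k"
  shows "list_all2 (\<lambda>g y. eval Q g (ys @ xs) y) (proj_range k (length xs)) xs"
proof -
  have "arg (k + i) (ys @ xs) = xs ! i" if "i < length xs" for i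
    using that assms by (simp add: arg_def nth_append)
  then show ?thesis
    using assms by (auto simp: proj_range_def list_all2_conv_all_nth intro!: eval_ProjI)
qed

definition "one_prog = Comp Succ [Zero]"
definition "pred_prog = Prim Zero (Proj 0)"
definition "sgn_prog = Prim Zero one_prog"
definition "is_zero_prog = Prim one_prog Zero"
definition "cond_prog = Prim (Proj 1) (Proj 2)"
definition "add_prog = Prim (Proj 0) (Comp Succ [Proj 1])"
definition "parity_prog = Prim Zero (Comp is_zero_prog [Proj 1])"
definition "half_prog = Prim Zero (Comp add_prog [Proj 1, Comp parity_prog [Proj 0]])"
definition "shiftr_prog = Prim (Proj 0) (Comp half_prog [Proj 1])"
definition "bit_prog = Comp parity_prog [shiftr_prog]"

lemma eval_one_prog: "y = 1 \<Longrightarrow> eval Q one_prog xs y"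
  unfolding one_prog_def by (rule eval_Comp1[OF eval_Zero]) (auto intro: eval_SuccI)

lemma eval_pred_prog: "y = x - 1 \<Longrightarrow> eval Q pred_prog [x] y"
  unfolding pred_prog_def
  by (rule eval_Prim_rec_natI[where G = "\<lambda>j r. j"])
     (auto intro: eval_Zero eval_ProjI simp: rec_nat_const_step split: nat.split)

lemma eval_sgn_prog: "y = (if x = 0 then 0 else 1) \<Longrightarrow> eval Q sgn_prog [x] y"
  unfolding sgn_prog_def
  by (rule eval_Prim_rec_natI[where G = "\<lambda>j r. 1"])
     (auto intro: eval_Zero eval_one_prog simp: rec_nat_const_step split: nat.split)

lemma eval_is_zero_prog: "y = (if x = 0 then 1 else 0) \<Longrightarrow> eval Q is_zero_prog [x] y"
  unfolding is_zero_prog_def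
  by (rule eval_Prim_rec_natI[where G = "\<lambda>j r. 0"])
     (auto intro: eval_Zero eval_one_prog simp: rec_nat_const_step split: nat.split)

lemma eval_cond_prog: "z = (if b = 0 then y else x) \<Longrightarrow> eval Q cond_prog [b, x, y] z"
  unfolding cond_prog_def
  by (rule eval_Prim_rec_natI[where G = "\<lambda>j r. x"])
     (auto intro: eval_ProjI simp: rec_nat_const_step split: nat.split)

lemma eval_add_prog: "z = a + b \<Longrightarrow> eval Q add_prog [a, b] z"
proof -
  have "rec_nat b (\<lambda>j r. Suc r) a = a + b" by (induction a) auto
  then show "z = a + b \<Longrightarrow> eval Q add_prog [a, b] z"
    unfolding add_prog_def
    by (intro eval_Prim_rec_natI[where G = "\<lambda>j r. Suc r"]) (auto intro!: eval_ProjI eval_Comp1 eval_SuccI)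
qed

lemma eval_parity_prog: "z = x mod 2 \<Longrightarrow> eval Q parity_prog [x] z"
proof -
  have "rec_nat 0 (\<lambda>j r. if r = 0 then 1 else 0) x = x mod 2"
    by (induction x) (auto simp: mod_Suc)
  then show "z = x mod 2 \<Longrightarrow> eval Q parity_prog [x] z"
    unfolding parity_prog_def
    by (intro eval_Prim_rec_natI[where G = "\<lambda>j r. if r = 0 then 1 else 0"])
       (auto intro!: eval_Zero eval_ProjI eval_Comp1 eval_is_zero_prog)
qed

lemma eval_half_prog: "z = x div 2 \<Longrightarrow> eval Q half_prog [x] z"
proof -
  have "rec_nat 0 (\<lambda>j r. r + j mod 2) x = x div 2"
  proof (induction x)
    case (Suc x) then show ?case by simp presburger
  qed simp
  then show "z = x div 2 \<Longrightarrow> eval Q half_prog [x] z"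
    unfolding half_prog_def
    by (intro eval_Prim_rec_natI[where G = "\<lambda>j r. r + j mod 2"])
       (auto intro!: eval_Zero eval_ProjI eval_Comp1 eval_Comp2 eval_add_prog eval_parity_prog)
qed

lemma eval_shiftr_prog: "z = e div 2 ^ k \<Longrightarrow> eval Q shiftr_prog [k, e] z"
proof -
  have "rec_nat e (\<lambda>j r. r div 2) k = e div 2 ^ k"
    by (induction k) (auto simp: div_mult2_eq[symmetric] mult.commute)
  then show "z = e div 2 ^ k \<Longrightarrow> eval Q shiftr_prog [k, e] z"
    unfolding shiftr_prog_def
    by (intro eval_Prim_rec_natI[where G = "\<lambda>j r. r div 2"])
       (auto intro!: eval_ProjI eval_Comp1 eval_half_prog)
qed

lemma eval_bit_prog: "z = (if k \<in> set_decode e then 1 else 0) \<Longrightarrow> eval Q bit_prog [k, e] z"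
  unfolding bit_prog_def
  by (rule eval_Comp1[OF eval_shiftr_prog[OF refl]], rule eval_parity_prog)
     (auto simp: set_decode_def odd_iff_mod_2_eq_one)

fun const_prog :: "nat \<Rightarrow> recf" where
  "const_prog 0 = Zero"
| "const_prog (Suc k) = Comp Succ [const_prog k]"

lemma eval_const_prog: "eval Q (const_prog k) xs k"
  by (induction k) (auto intro!: eval_ZeroI eval_Comp1 eval_SuccI)

fun minus_const_prog :: "nat \<Rightarrow> recf" where
  "minus_const_prog 0 = Proj 0"
| "minus_const_prog (Suc k) = Comp pred_prog [minus_const_prog k]"

lemma eval_minus_const_prog: "eval Q (minus_const_prog b) [x] (x - b)"
  by (induction b) (auto intro!: eval_ProjI eval_Comp1 eval_pred_prog)

fun all_nonzero_prog :: "recf list \<Rightarrow> recf" where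
  "all_nonzero_prog [] = one_prog"
| "all_nonzero_prog (p # ps) = Comp cond_prog [p, all_nonzero_prog ps, Zero]"

lemma eval_all_nonzero_prog:
  "list_all2 (\<lambda>p y. eval Q p xs y) ps ys \<Longrightarrow>
   eval Q (all_nonzero_prog ps) xs (if list_all (\<lambda>y. y \<noteq> 0) ys then 1 else 0)"
proof (induction ps arbitrary: ys)
  case Nil then show ?case by (auto intro: eval_one_prog)
next
  case (Cons p ps)
  then obtain y ys' where ys: "ys = y # ys'" "eval Q p xs y" "list_all2 (\<lambda>p y. eval Q p xs y) ps ys'"
    by (cases ys) auto
  show ?case using ys Cons.IH[OF ys(3)] by (auto intro!: eval_Comp3 eval_ZeroI eval_cond_prog)
qed

section \<open>Determinism and the use principle\<close>

lemma eval_deterministic: "eval Q f xs y \<Longrightarrow> eval Q f xs z \<Longrightarrow> y = z"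
proof (induction arbitrary: z rule: eval.induct)
  case (eval_Comp ys gs xs f z')
  from eval_Comp.prems obtain ys' where ys':
    "length ys' = length gs" "\<forall>k<length gs. eval Q (gs ! k) xs (ys' ! k)" "eval Q f ys' z"
    by (cases rule: eval.cases) auto
  have "ys' = ys" using ys' eval_Comp.hyps eval_Comp.IH by (intro nth_equalityI) auto
  then show ?case using eval_Comp.IH ys' by blast
next
  case (eval_Prim0 f xs y g)
  from eval_Prim0.prems show ?case by (cases rule: eval.cases) (use eval_Prim0 in auto)
next
  case (eval_PrimS f g k xs y z')
  from eval_PrimS.prems obtain y' where "eval Q (Prim f g) (k # xs) y'" "eval Q g (k # y' # xs) z"
    by (cases rule: eval.cases) auto
  then show ?case using eval_PrimS by blast
next
  case (eval_Mn f k xs)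
  from eval_Mn.prems have z: "eval Q f (z # xs) 0 \<and> (\<forall>j<z. \<exists>y. eval Q f (j # xs) (Suc y))"
    by (cases rule: eval.cases) blast
  show ?case
  proof (rule ccontr)
    assume "k \<noteq> z"
    then consider "k < z" | "z < k" by linarith
    then show False
    proof cases
      case 1
      then obtain y where "eval Q f (k # xs) (Suc y)" using z by blast
      then show False using eval_Mn.IH(1) by fastforce
    next
      case 2
      then obtain y where "eval Q f (z # xs) (Suc y)" "\<And>w. eval Q f (z # xs) w \<Longrightarrow> Suc y = w"
        using eval_Mn.IH(2) by blast
      then show False using z by fastforce
    qed
  qed
qed (auto elim: eval.cases)

lemma eval_finite_use:
  "eval Q f xs y \<Longrightarrow> \<exists>S. finite S \<and> (\<forall>Q'. (\<forall>x\<in>S. x \<in> Q \<longleftrightarrow> x \<in> Q') \<longrightarrow> eval Q' f xs y)"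
proof (induction rule: eval.induct)
  case (eval_Zero xs) then show ?case by (auto intro: eval.eval_Zero)
next
  case (eval_Succ xs) then show ?case by (auto intro: eval.eval_Succ)
next
  case (eval_Proj i xs) then show ?case by (auto intro: eval.eval_Proj)
next
  case (eval_Orc xs)
  show ?case by (rule exI[of _ "{arg 0 xs}"]) (auto intro!: eval_OrcI)
next
  case (eval_Comp ys gs xs f z)
  then obtain S where S: "\<forall>k<length gs. finite (S k) \<and>
      (\<forall>Q'. (\<forall>x\<in>S k. x \<in> Q \<longleftrightarrow> x \<in> Q') \<longrightarrow> eval Q' (gs ! k) xs (ys ! k))"
    by metis
  obtain Sf where Sf: "finite Sf" "\<forall>Q'. (\<forall>x\<in>Sf. x \<in> Q \<longleftrightarrow> x \<in> Q') \<longrightarrow> eval Q' f ys z"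
    using eval_Comp by blast
  show ?case
  proof (rule exI[of _ "Sf \<union> (\<Union>k<length gs. S k)"], intro conjI allI impI)
    show "finite (Sf \<union> (\<Union>k<length gs. S k))" using S Sf by auto
    fix Q' assume agree: "\<forall>x\<in>Sf \<union> (\<Union>k<length gs. S k). x \<in> Q \<longleftrightarrow> x \<in> Q'"
    show "eval Q' (Comp f gs) xs z"
      by (rule eval.eval_Comp[OF eval_Comp.hyps(1)]) (use S Sf agree in blast)+
  qed
next
  case (eval_Prim0 f xs y g) then show ?case by (meson eval.eval_Prim0)
next
  case (eval_PrimS f g k xs y z)
  then obtain S1 S2 where
    "finite S1" "\<forall>Q'. (\<forall>x\<in>S1. x \<in> Q \<longleftrightarrow> x \<in> Q') \<longrightarrow> eval Q' (Prim f g) (k # xs) y"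
    "finite S2" "\<forall>Q'. (\<forall>x\<in>S2. x \<in> Q \<longleftrightarrow> x \<in> Q') \<longrightarrow> eval Q' g (k # y # xs) z"
    by blast
  then show ?case by (intro exI[of _ "S1 \<union> S2"]) (auto intro: eval.eval_PrimS)
next
  case (eval_Mn f k xs)
  obtain S0 where S0: "finite S0" "\<forall>Q'. (\<forall>x\<in>S0. x \<in> Q \<longleftrightarrow> x \<in> Q') \<longrightarrow> eval Q' f (k # xs) 0"
    using eval_Mn by blast
  obtain Y S where S: "\<forall>j<k. finite (S j) \<and>
      (\<forall>Q'. (\<forall>x\<in>S j. x \<in> Q \<longleftrightarrow> x \<in> Q') \<longrightarrow> eval Q' f (j # xs) (Suc (Y j)))"
    using eval_Mn.IH(2) by metis
  show ?case
  proof (rule exI[of _ "S0 \<union> (\<Union>j<k. S j)"], intro conjI allI impI)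
    show "finite (S0 \<union> (\<Union>j<k. S j))" using S S0 by auto
    fix Q' assume agree: "\<forall>x\<in>S0 \<union> (\<Union>j<k. S j). x \<in> Q \<longleftrightarrow> x \<in> Q'"
    show "eval Q' (Mn f) xs k"
      by (rule eval.eval_Mn) (use S0 S agree in blast)+
  qed
qed

lemma join_iff: "x \<in> join A B \<longleftrightarrow> (even x \<and> x div 2 \<in> A) \<or> (odd x \<and> x div 2 \<in> B)"
  unfolding join_def by (auto elim: evenE oddE)

lemma eval_join_finite_use:
  assumes "eval (join C G) f xs y"
  obtains U where "finite U" "\<And>G'. G' \<inter> U = G \<inter> U \<Longrightarrow> eval (join C G') f xs y"
proof -
  obtain S where S: "finite S" "\<And>Q'. \<forall>x\<in>S. x \<in> join C G \<longleftrightarrow> x \<in> Q' \<Longrightarrow> eval Q' f xs y"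
    using eval_finite_use[OF assms] by blast
  have "eval (join C G') f xs y" if "G' \<inter> (\<lambda>x. x div 2) ` S = G \<inter> (\<lambda>x. x div 2) ` S" for G'
    using that by (intro S(2)) (auto simp: join_iff)
  with that S(1) show ?thesis by blast
qed

section \<open>Clocked evaluation\<close>

text \<open>\<open>mu_scan v n\<close> runs the search of an \<open>Mn\<close> step through the candidates \<open>j < n\<close>,
  where \<open>v j\<close> is the clocked value at \<open>j\<close>. Its state is \<open>0\<close> while still searching,
  \<open>1\<close> once the clock ran out at some \<open>j\<close>, and \<open>Suc (Suc k)\<close> once \<open>k\<close> is found.\<close>
fun mu_scan :: "(nat \<Rightarrow> nat) \<Rightarrow> nat \<Rightarrow> nat" where
  "mu_scan v 0 = 0"
| "mu_scan v (Suc j) =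
     (let s = mu_scan v j in
      if s \<noteq> 0 then s else if v j = 0 then 1 else if v j = 1 then Suc (Suc j) else 0)"

lemma mu_scan_eq_0I: "(\<forall>j<n. v j \<ge> 2) \<Longrightarrow> mu_scan v n = 0"
  by (induction n) (auto simp: Let_def)

lemma mu_scan_eq_0D: "mu_scan v n = 0 \<Longrightarrow> \<forall>j<n. v j \<ge> 2"
proof (induction n)
  case (Suc n)
  then show ?case by (auto simp: Let_def less_Suc_eq split: if_splits)
qed simp

lemma mu_scan_foundD: "mu_scan v n = Suc (Suc k) \<Longrightarrow> k < n \<and> v k = 1 \<and> (\<forall>j<k. v j \<ge> 2)"
proof (induction n)
  case (Suc n)
  show ?case
  proof (cases "mu_scan v n = 0")
    case True
    then show ?thesis using Suc.prems mu_scan_eq_0D[OF True] by (auto simp: Let_def split: if_splits)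
  next
    case False
    then show ?thesis using Suc by (auto simp: Let_def)
  qed
qed simp

lemma mu_scan_foundI: "k < n \<Longrightarrow> v k = 1 \<Longrightarrow> \<forall>j<k. v j \<ge> 2 \<Longrightarrow> mu_scan v n = Suc (Suc k)"
proof (induction n)
  case (Suc n)
  show ?case
  proof (cases "k < n")
    case True then show ?thesis using Suc by (auto simp: Let_def)
  next
    case False
    then have "k = n" using Suc by simp
    then show ?thesis using mu_scan_eq_0I[of n v] Suc.prems by (auto simp: Let_def)
  qed
qed simp

text \<open>\<open>clocked f Q t xs\<close> is \<open>Suc y\<close> if \<open>f\<close> outputs \<open>y\<close> on \<open>xs\<close> when every unbounded
  search only inspects the candidates \<open>j \<le> t\<close>, and \<open>0\<close> if no output is reached that way.\<close>
primrec clocked :: "recf \<Rightarrow> nat set \<Rightarrow> nat \<Rightarrow> nat list \<Rightarrow> nat" where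
  "clocked Zero Q t xs = 1"
| "clocked Succ Q t xs = Suc (Suc (arg 0 xs))"
| "clocked (Proj i) Q t xs = Suc (arg i xs)"
| "clocked Orc Q t xs = Suc (if arg 0 xs \<in> Q then 1 else 0)"
| "clocked (Comp f gs) Q t xs =
     (if list_all (\<lambda>y. y \<noteq> 0) (map (\<lambda>g. clocked g Q t xs) gs)
      then clocked f Q t (map (\<lambda>g. clocked g Q t xs - 1) gs) else 0)"
| "clocked (Prim f g) Q t xs =
     (case xs of
       [] \<Rightarrow> 0
     | k # ys \<Rightarrow> rec_nat (clocked f Q t ys) (\<lambda>j r. if r = 0 then 0 else clocked g Q t (j # (r - 1) # ys)) k)"
| "clocked (Mn f) Q t xs = mu_scan (\<lambda>j. clocked f Q t (j # xs)) (Suc t) - 1"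

lemma eval_Prim_of_guarded_rec_nat:
  assumes "\<And>y. b = Suc y \<Longrightarrow> eval Q f xs y" "\<And>j r y. w j r = Suc y \<Longrightarrow> eval Q g (j # r # xs) y"
    and "rec_nat b (\<lambda>j r. if r = 0 then 0 else w j (r - 1)) k = Suc y"
  shows "eval Q (Prim f g) (k # xs) y"
  using assms(3)
proof (induction k arbitrary: y)
  case 0 then show ?case using assms(1) by (auto intro: eval_Prim0)
next
  case (Suc k)
  let ?r = "rec_nat b (\<lambda>j r. if r = 0 then 0 else w j (r - 1)) k"
  have r: "?r \<noteq> 0" and w: "w k (?r - 1) = Suc y" using Suc.prems by (auto split: if_splits)
  have "eval Q (Prim f g) (k # xs) (?r - 1)" using Suc.IH r by simp
  then show ?case using assms(2)[OF w] by (rule eval_PrimS)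
qed

lemma guarded_rec_nat_mono:
  assumes "\<And>y. b = Suc y \<Longrightarrow> b' = Suc y" "\<And>j r y. w j r = Suc y \<Longrightarrow> w' j r = Suc y"
    and "rec_nat b (\<lambda>j r. if r = 0 then 0 else w j (r - 1)) k = Suc y"
  shows "rec_nat b' (\<lambda>j r. if r = 0 then 0 else w' j (r - 1)) k = Suc y"
  using assms(3)
proof (induction k arbitrary: y)
  case 0 then show ?case using assms(1) by simp
next
  case (Suc k)
  let ?r = "rec_nat b (\<lambda>j r. if r = 0 then 0 else w j (r - 1)) k"
  have "?r \<noteq> 0" and "w k (?r - 1) = Suc y" using Suc.prems by (auto split: if_splits)
  then show ?case using Suc.IH[of "?r - 1"] assms(2) by simp
qed

lemma clocked_sound: "clocked f Q t xs = Suc y \<Longrightarrow> eval Q f xs y"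
proof (induction f arbitrary: xs y)
  case Zero then show ?case by (auto intro: eval_ZeroI)
next
  case Succ then show ?case by (auto intro: eval_SuccI)
next
  case (Proj i) then show ?case by (auto intro: eval_ProjI)
next
  case Orc then show ?case by (auto intro: eval_OrcI)
next
  case (Comp f gs)
  let ?ys = "map (\<lambda>g. clocked g Q t xs - 1) gs"
  have A: "list_all (\<lambda>y. y \<noteq> 0) (map (\<lambda>g. clocked g Q t xs) gs)" and F: "clocked f Q t ?ys = Suc y"
    using Comp.prems by (auto split: if_splits)
  have "eval Q f ?ys y" using Comp.IH(1) F by blast
  moreover have "\<forall>k<length gs. eval Q (gs ! k) xs (?ys ! k)"
  proof (intro allI impI)
    fix k assume k: "k < length gs"
    then have "clocked (gs ! k) Q t xs \<noteq> 0" using A by (auto simp: list_all_length)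
    then have "clocked (gs ! k) Q t xs = Suc (?ys ! k)" using k by simp
    then show "eval Q (gs ! k) xs (?ys ! k)" using Comp.IH(2) k by (meson nth_mem)
  qed
  ultimately show ?case by (intro eval_Comp[of ?ys]) auto
next
  case (Prim f g)
  then obtain k ys where xs: "xs = k # ys" by (cases xs) auto
  have "eval Q (Prim f g) (k # ys) y"
    by (rule eval_Prim_of_guarded_rec_nat[where w = "\<lambda>j r. clocked g Q t (j # r # ys)"])
       (use Prim xs in simp_all)
  then show ?case using xs by simp
next
  case (Mn f)
  let ?v = "\<lambda>j. clocked f Q t (j # xs)"
  have "mu_scan ?v (Suc t) = Suc (Suc y)" using Mn.prems by simp
  from mu_scan_foundD[OF this] have h: "?v y = 1" "\<forall>j<y. ?v j \<ge> 2" by auto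
  have "eval Q f (y # xs) 0" using Mn.IH h(1) by simp
  moreover have "\<forall>j<y. \<exists>z. eval Q f (j # xs) (Suc z)"
  proof (intro allI impI)
    fix j assume "j < y"
    then have "?v j = Suc (Suc (?v j - 2))" using h(2) by fastforce
    then show "\<exists>z. eval Q f (j # xs) (Suc z)" using Mn.IH by blast
  qed
  ultimately show ?case by (rule eval_Mn)
qed

lemma clocked_mono: "clocked f Q t xs = Suc y \<Longrightarrow> t \<le> t' \<Longrightarrow> clocked f Q t' xs = Suc y"
proof (induction f arbitrary: xs y)
  case (Comp f gs)
  have A: "list_all (\<lambda>y. y \<noteq> 0) (map (\<lambda>g. clocked g Q t xs) gs)"
    and F: "clocked f Q t (map (\<lambda>g. clocked g Q t xs - 1) gs) = Suc y"
    using Comp.prems by (auto split: if_splits)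
  have E: "clocked g Q t' xs = clocked g Q t xs" if "g \<in> set gs" for g
  proof -
    have "clocked g Q t xs \<noteq> 0" using A that by (auto simp: list_all_iff)
    then have "clocked g Q t xs = Suc (clocked g Q t xs - 1)" by simp
    then show ?thesis using Comp.IH(2)[OF that _ Comp.prems(2)] by metis
  qed
  then have M1: "map (\<lambda>g. clocked g Q t' xs) gs = map (\<lambda>g. clocked g Q t xs) gs"
    and M2: "map (\<lambda>g. clocked g Q t' xs - 1) gs = map (\<lambda>g. clocked g Q t xs - 1) gs" by auto
  show ?case unfolding clocked.simps M1 M2 using A Comp.IH(1)[OF F Comp.prems(2)] by simp
next
  case (Prim f g)
  then obtain k ys where xs: "xs = k # ys" by (cases xs) auto
  have "rec_nat (clocked f Q t' ys) (\<lambda>j r. if r = 0 then 0 else clocked g Q t' (j # (r - 1) # ys)) k = Suc y"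
    by (rule guarded_rec_nat_mono[where w = "\<lambda>j r. clocked g Q t (j # r # ys)"])
       (use Prim xs in simp_all)
  then show ?case using xs by simp
next
  case (Mn f)
  let ?v = "\<lambda>j. clocked f Q t (j # xs)"
  let ?w = "\<lambda>j. clocked f Q t' (j # xs)"
  have "mu_scan ?v (Suc t) = Suc (Suc y)" using Mn.prems by simp
  from mu_scan_foundD[OF this] have h: "y < Suc t" "?v y = 1" "\<forall>j<y. ?v j \<ge> 2" by auto
  have "?w y = 1" using Mn.IH h(2) Mn.prems(2) by simp
  moreover have "\<forall>j<y. ?w j \<ge> 2"
  proof (intro allI impI)
    fix j assume "j < y"
    then have "?v j = Suc (?v j - 1)" "?v j \<ge> 2" using h(3) by fastforce+
    then show "?w j \<ge> 2" using Mn.IH Mn.prems(2) by metis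
  qed
  ultimately have "mu_scan ?w (Suc t') = Suc (Suc y)" using h(1) Mn.prems(2) by (intro mu_scan_foundI) auto
  then show ?case by simp
qed simp_all

lemma clocked_complete: "eval Q f xs y \<Longrightarrow> \<exists>t. clocked f Q t xs = Suc y"
proof (induction rule: eval.induct)
  case (eval_Comp ys gs xs f z)
  then obtain T where T: "\<forall>k<length gs. clocked (gs ! k) Q (T k) xs = Suc (ys ! k)" by metis
  obtain tf where tf: "clocked f Q tf ys = Suc z" using eval_Comp by blast
  define TT where "TT = tf + (\<Sum>k<length gs. T k)"
  have "T k \<le> TT" if "k < length gs" for k
    unfolding TT_def using that by (simp add: member_le_sum trans_le_add2)
  then have K: "clocked (gs ! k) Q TT xs = Suc (ys ! k)" if "k < length gs" for k
    using T clocked_mono that by blast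
  have M1: "map (\<lambda>g. clocked g Q TT xs) gs = map Suc ys"
    using K eval_Comp.hyps(1) by (intro nth_equalityI) auto
  have M2: "map (\<lambda>g. clocked g Q TT xs - 1) gs = ys"
    using K eval_Comp.hyps(1) by (intro nth_equalityI) auto
  have "clocked f Q TT ys = Suc z" using clocked_mono[OF tf] unfolding TT_def by simp
  then have "clocked (Comp f gs) Q TT xs = Suc z" unfolding clocked.simps M1 M2 by (simp add: list_all_iff)
  then show ?case by blast
next
  case (eval_Prim0 f xs y g)
  then show ?case by simp
next
  case (eval_PrimS f g k xs y z)
  obtain t1 where t1: "clocked (Prim f g) Q t1 (k # xs) = Suc y" using eval_PrimS by blast
  obtain t2 where t2: "clocked g Q t2 (k # y # xs) = Suc z" using eval_PrimS by blast
  have a: "clocked (Prim f g) Q (t1 + t2) (k # xs) = Suc y" using clocked_mono[OF t1] by simp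
  have b: "clocked g Q (t1 + t2) (k # y # xs) = Suc z" using clocked_mono[OF t2] by simp
  have "clocked (Prim f g) Q (t1 + t2) (Suc k # xs) = Suc z" using a b by simp
  then show ?case by blast
next
  case (eval_Mn f k xs)
  obtain t0 where t0: "clocked f Q t0 (k # xs) = Suc 0" using eval_Mn by blast
  have "\<forall>j<k. \<exists>t y. clocked f Q t (j # xs) = Suc (Suc y)" using eval_Mn.IH(2) by blast
  then obtain T Y where TY: "\<forall>j<k. clocked f Q (T j) (j # xs) = Suc (Suc (Y j))" by metis
  define TT where "TT = t0 + k + (\<Sum>j<k. T j)"
  have "T j \<le> TT" if "j < k" for j
    unfolding TT_def using that by (simp add: member_le_sum trans_le_add2)
  then have K: "clocked f Q TT (j # xs) = Suc (Suc (Y j))" if "j < k" for j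
    using TY clocked_mono that by blast
  have K0: "clocked f Q TT (k # xs) = Suc 0" using clocked_mono[OF t0] unfolding TT_def by simp
  have "mu_scan (\<lambda>j. clocked f Q TT (j # xs)) (Suc TT) = Suc (Suc k)"
    by (rule mu_scan_foundI) (use K K0 TT_def in auto)
  then have "clocked (Mn f) Q TT xs = Suc k" by simp
  then show ?case by blast
qed auto

definition prim_step_prog :: "recf \<Rightarrow> nat \<Rightarrow> recf" where
  "prim_step_prog p a =
     Comp cond_prog [Proj 1, Comp p ([Proj 2, Proj 3, Proj 0, Comp pred_prog [Proj 1]] @ proj_range 4 a), Zero]"

lemma eval_prim_step_prog:
  assumes "\<And>j r. eval Q p (t # e # j # r # xs) (w j r)" "length xs = a"
  shows "eval Q (prim_step_prog p a) (j # r # t # e # xs) (if r = 0 then 0 else w j (r - 1))"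
proof -
  have "list_all2 (\<lambda>p y. eval Q p (j # r # t # e # xs) y)
      ([Proj 2, Proj 3, Proj 0, Comp pred_prog [Proj 1]] @ proj_range 4 a) (t # e # j # (r - 1) # xs)"
    using eval_proj_range[of "[j, r, t, e]" 4 Q xs] assms(2) by (auto intro!: eval_ProjI eval_Comp1 eval_pred_prog)
  from eval_Comp_list_all2[OF this assms(1)] show ?thesis
    unfolding prim_step_prog_def by (intro eval_Comp3[OF eval_ProjI[OF refl] _ eval_Zero] eval_cond_prog) simp_all
qed

definition mu_step_prog :: "recf \<Rightarrow> nat \<Rightarrow> recf" where
  "mu_step_prog p a =
     (let q = Comp p ([Proj 2, Proj 3, Proj 0] @ proj_range 4 a)
      in Comp cond_prog [Proj 1, Proj 1,
           Comp cond_prog [q, Comp cond_prog [Comp pred_prog [q], Zero, Comp Succ [Comp Succ [Proj 0]]],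
             one_prog]])"

lemma eval_mu_step_prog:
  assumes "\<And>j. eval Q p (t # e # j # xs) (v j)" "length xs = a"
  shows "eval Q (mu_step_prog p a) (j # s # t # e # xs)
           (if s \<noteq> 0 then s else if v j = 0 then 1 else if v j = 1 then Suc (Suc j) else 0)"
proof -
  have "list_all2 (\<lambda>p y. eval Q p (j # s # t # e # xs) y)
      ([Proj 2, Proj 3, Proj 0] @ proj_range 4 a) (t # e # j # xs)"
    using eval_proj_range[of "[j, s, t, e]" 4 Q xs] assms(2) by (auto intro!: eval_ProjI)
  from eval_Comp_list_all2[OF this assms(1)]
  have q: "eval Q (Comp p ([Proj 2, Proj 3, Proj 0] @ proj_range 4 a)) (j # s # t # e # xs) (v j)" .
  show ?thesis
    unfolding mu_step_prog_def Let_def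
    by (rule eval_Comp3[OF eval_ProjI[OF refl] eval_ProjI[OF refl] eval_Comp3[OF q
          eval_Comp3[OF eval_Comp1[OF q eval_pred_prog[OF refl]] eval_ZeroI[OF refl]
            eval_Comp1[OF eval_Comp1[OF eval_ProjI[OF refl] eval_SuccI[OF refl]] eval_SuccI[OF refl]]
            eval_cond_prog[OF refl]]
          eval_one_prog[OF refl] eval_cond_prog[OF refl]]], rule eval_cond_prog) auto
qed

lemma mu_scan_rec_nat:
  "rec_nat 0 (\<lambda>j s. if s \<noteq> 0 then s else if v j = 0 then 1 else if v j = 1 then Suc (Suc j) else 0) n
   = mu_scan v n"
  by (induction n) (auto simp: Let_def)

primrec clocked_prog :: "recf \<Rightarrow> recf \<Rightarrow> nat \<Rightarrow> recf" where
  "clocked_prog mem Zero a = one_prog"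
| "clocked_prog mem Succ a = Comp Succ [Comp Succ [Proj 2]]"
| "clocked_prog mem (Proj i) a = Comp Succ [Proj (i + 2)]"
| "clocked_prog mem Orc a = Comp Succ [Comp mem [Proj 1, Proj 2]]"
| "clocked_prog mem (Comp f gs) a =
     Comp cond_prog [all_nonzero_prog (map (\<lambda>g. clocked_prog mem g a) gs),
       Comp (clocked_prog mem f (length gs))
         (Proj 0 # Proj 1 # map (\<lambda>g. Comp pred_prog [clocked_prog mem g a]) gs),
       Zero]"
| "clocked_prog mem (Prim f g) a =
     (case a of
       0 \<Rightarrow> Zero
     | Suc a' \<Rightarrow> Comp (Prim (clocked_prog mem f a') (prim_step_prog (clocked_prog mem g (Suc (Suc a'))) a'))
                   ([Proj 2, Proj 0, Proj 1] @ proj_range 3 a'))"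
| "clocked_prog mem (Mn f) a =
     Comp pred_prog [Comp (Prim Zero (mu_step_prog (clocked_prog mem f (Suc a)) a))
       (Comp Succ [Proj 0] # proj_range 0 (a + 2))]"

lemma list_all2_map_map: "(\<And>g. g \<in> set gs \<Longrightarrow> P (f g) (h g)) \<Longrightarrow> list_all2 P (map f gs) (map h gs)"
  by (induction gs) auto

lemma eval_clocked_prog:
  assumes mem: "\<And>e x. eval Q mem [e, x] (if x \<in> Oe e then 1 else 0)"
  shows "length xs = a \<Longrightarrow> eval Q (clocked_prog mem f a) (t # e # xs) (clocked f (Oe e) t xs)"
proof (induction f arbitrary: a xs)
  case Zero then show ?case by (auto intro: eval_one_prog)
next
  case Succ then show ?case by (auto intro!: eval_Comp1 eval_SuccI eval_ProjI)
next
  case (Proj i) then show ?case by (auto intro!: eval_Comp1 eval_SuccI eval_ProjI)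
next
  case Orc then show ?case by (auto intro!: eval_Comp1 eval_Comp2 eval_SuccI eval_ProjI mem)
next
  case (Comp f gs)
  let ?ys = "map (\<lambda>g. clocked g (Oe e) t xs - 1) gs"
  have gs: "list_all2 (\<lambda>p y. eval Q p (t # e # xs) y)
      (map (\<lambda>g. clocked_prog mem g a) gs) (map (\<lambda>g. clocked g (Oe e) t xs) gs)"
    using Comp by (intro list_all2_map_map) auto
  have args: "list_all2 (\<lambda>p y. eval Q p (t # e # xs) y)
      (Proj 0 # Proj 1 # map (\<lambda>g. Comp pred_prog [clocked_prog mem g a]) gs) (t # e # ?ys)"
    using Comp by (auto intro!: list_all2_map_map eval_ProjI eval_Comp1 eval_pred_prog)
  have f: "eval Q (clocked_prog mem f (length gs)) (t # e # ?ys) (clocked f (Oe e) t ?ys)"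
    using Comp.IH(1)[of ?ys] by simp
  show ?case unfolding clocked_prog.simps clocked.simps
    by (rule eval_Comp3[OF eval_all_nonzero_prog[OF gs] eval_Comp_list_all2[OF args f] eval_Zero],
        rule eval_cond_prog) simp
next
  case (Prim f g)
  show ?case
  proof (cases a)
    case 0 then show ?thesis using Prim by (auto intro: eval_ZeroI)
  next
    case (Suc a')
    with Prim obtain k xs' where xs: "xs = k # xs'" "length xs' = a'" by (cases xs) auto
    have args: "list_all2 (\<lambda>p y. eval Q p (t # e # k # xs') y)
        ([Proj 2, Proj 0, Proj 1] @ proj_range 3 a') (k # t # e # xs')"
      using eval_proj_range[of "[t, e, k]" 3 Q xs'] xs by (auto intro!: eval_ProjI)
    have base: "eval Q (clocked_prog mem f a') (t # e # xs') (clocked f (Oe e) t xs')"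
      using Prim.IH(1)[of xs'] xs(2) by simp
    have step: "eval Q (prim_step_prog (clocked_prog mem g (Suc (Suc a'))) a') (j # r # t # e # xs')
        (if r = 0 then 0 else clocked g (Oe e) t (j # (r - 1) # xs'))" for j r
      by (rule eval_prim_step_prog) (auto intro: Prim.IH(2) simp: xs(2))
    show ?thesis
      unfolding Suc xs clocked_prog.simps clocked.simps nat.case list.case
      by (rule eval_Comp_list_all2[OF args], rule eval_Prim_rec_natI[OF base step refl])
  qed
next
  case (Mn f)
  have args: "list_all2 (\<lambda>p y. eval Q p (t # e # xs) y)
      (Comp Succ [Proj 0] # proj_range 0 (a + 2)) (Suc t # t # e # xs)"
    using eval_proj_range[of "[]" 0 Q "t # e # xs"] Mn.prems by (auto intro!: eval_Comp1 eval_ProjI eval_SuccI)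
  have step: "eval Q (mu_step_prog (clocked_prog mem f (Suc a)) a) (j # s # t # e # xs)
      (if s \<noteq> 0 then s else if clocked f (Oe e) t (j # xs) = 0 then 1
       else if clocked f (Oe e) t (j # xs) = 1 then Suc (Suc j) else 0)" for j s
    by (rule eval_mu_step_prog) (auto intro: Mn.IH simp: Mn.prems)
  show ?case unfolding clocked_prog.simps clocked.simps
    by (rule eval_Comp1[OF eval_Comp_list_all2[OF args eval_Prim_rec_natI[OF eval_Zero step refl]]],
        rule eval_pred_prog) (simp only: mu_scan_rec_nat)
qed

section \<open>Searching over a uniform family of oracles\<close>

lemma rec_nat_or_nonzero:
  "rec_nat (0::nat) (\<lambda>j r. if r = 0 then w j else 1) n \<noteq> 0 \<longleftrightarrow> (\<exists>j<n. w j \<noteq> (0::nat))"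
  by (induction n) (auto simp: less_Suc_eq)

lemma ex_eval_uniform_oracles:
  assumes mem: "\<And>e x. eval Q mem [e, x] (if x \<in> Oe e then 1 else 0)"
  obtains g where "\<And>c. (\<exists>z. eval Q g [c] z) \<longleftrightarrow> (\<exists>e y. eval (Oe e) f [c] y)"
proof -
  define found_prog where
    "found_prog = Prim Zero (Comp cond_prog [Proj 1, one_prog, Comp (clocked_prog mem f 1) [Proj 2, Proj 0, Proj 3]])"
  define found where "found t c k = rec_nat 0 (\<lambda>j r. if r = 0 then clocked f (Oe j) t [c] else 1) k"
    for t c k
  have found_iff: "found t c k \<noteq> 0 \<longleftrightarrow> (\<exists>j<k. clocked f (Oe j) t [c] \<noteq> 0)" for t c k
    unfolding found_def by (rule rec_nat_or_nonzero)
  have eval_found: "eval Q found_prog [k, t, c] (found t c k)" for k t c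
  proof -
    have "eval Q (Comp (clocked_prog mem f 1) [Proj 2, Proj 0, Proj 3]) [j, r, t, c] (clocked f (Oe j) t [c])"
      for j r
      using eval_clocked_prog[OF mem, of "[c]" 1 f t j]
      by (intro eval_Comp3[OF eval_ProjI[OF refl] eval_ProjI[OF refl] eval_ProjI[OF refl]]) simp
    then show ?thesis
      unfolding found_prog_def found_def
      by (intro eval_Prim_rec_natI[OF eval_Zero _ refl] eval_Comp3[OF eval_ProjI[OF refl] eval_one_prog[OF refl]]
          eval_cond_prog) simp_all
  qed
  define search_prog where "search_prog = Comp is_zero_prog [Comp found_prog [Comp Succ [Proj 0], Proj 0, Proj 1]]"
  have eval_search: "eval Q search_prog [t, c] (if found t c (Suc t) = 0 then 1 else 0)" for t c
  proof -
    have "eval Q (Comp found_prog [Comp Succ [Proj 0], Proj 0, Proj 1]) [t, c] (found t c (Suc t))"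
      by (rule eval_Comp3[OF eval_Comp1[OF eval_ProjI[OF refl] eval_SuccI[OF refl]]
            eval_ProjI[OF refl] eval_ProjI[OF refl]]) (simp add: eval_found)
    then show ?thesis unfolding search_prog_def by (rule eval_Comp1) (rule eval_is_zero_prog, simp)
  qed
  \<comment> \<open>\<open>Mn search_prog\<close> dovetails: it looks for a clock \<open>t\<close> within which \<open>f\<close> halts relative to
    one of the oracles \<open>Oe 0, \<dots>, Oe t\<close>.\<close>
  have "(\<exists>z. eval Q (Mn search_prog) [c] z) \<longleftrightarrow> (\<exists>e y. eval (Oe e) f [c] y)" for c
  proof
    assume "\<exists>z. eval Q (Mn search_prog) [c] z"
    then obtain z where "eval Q search_prog [z, c] 0" by (auto elim: eval.cases)
    then have "(if found z c (Suc z) = 0 then 1 else 0) = (0::nat)"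
      by (rule eval_deterministic[OF eval_search])
    then have "found z c (Suc z) \<noteq> 0" by presburger
    then obtain e where "clocked f (Oe e) z [c] \<noteq> 0" using found_iff by blast
    then show "\<exists>e y. eval (Oe e) f [c] y" using clocked_sound not0_implies_Suc by blast
  next
    assume "\<exists>e y. eval (Oe e) f [c] y"
    then obtain e y t0 where "clocked f (Oe e) t0 [c] = Suc y" using clocked_complete by blast
    then have "clocked f (Oe e) (t0 + e) [c] = Suc y" by (rule clocked_mono) simp
    then have halts: "found (t0 + e) c (Suc (t0 + e)) \<noteq> 0" unfolding found_iff by (intro exI[of _ e]) simp
    define hit where "hit t \<longleftrightarrow> found t c (Suc t) \<noteq> 0" for t
    obtain k where k: "hit k" "\<And>j. j < k \<Longrightarrow> \<not> hit j"
      using halts exists_least_iff[of hit] unfolding hit_def by blast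
    have "eval Q (Mn search_prog) [c] k"
    proof (rule eval_Mn)
      show "eval Q search_prog [k, c] 0"
        using eval_search[of k c] k(1) unfolding hit_def by presburger
      show "\<forall>j<k. \<exists>y. eval Q search_prog [j, c] (Suc y)"
      proof (intro allI impI)
        fix j assume "j < k"
        then have "found j c (Suc j) = 0" using k(2) unfolding hit_def by blast
        then show "\<exists>y. eval Q search_prog [j, c] (Suc y)" using eval_search[of j c] by auto
      qed
    qed
    then show "\<exists>z. eval Q (Mn search_prog) [c] z" by blast
  qed
  then show thesis by (rule that)
qed

section \<open>Finite extensions inside a computable reservoir\<close>

definition finite_extension :: "nat set \<Rightarrow> nat set \<Rightarrow> nat \<Rightarrow> nat set" where
  "finite_extension F X e = F \<union> (set_decode e \<inter> X)"

lemma computable_join_finite_extension: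
  assumes "computable_in X C" "finite F"
  obtains mem where "\<And>e x. eval C mem [e, x] (if x \<in> join C (finite_extension F X e) then 1 else 0)"
proof -
  obtain p where p: "\<And>x. eval C p [x] (if x \<in> X then 1 else 0)"
    using assms(1) unfolding computable_in_def by blast
  define ext_prog where "ext_prog = Comp cond_prog [Comp bit_prog [Proj 0, const_prog (set_encode F)], one_prog,
      Comp cond_prog [Comp bit_prog [Proj 0, Proj 1], Comp p [Proj 0], Zero]]"
  have ext: "eval C ext_prog [k, e] (if k \<in> finite_extension F X e then 1 else 0)" for k e
    unfolding ext_prog_def
    by (rule eval_Comp3[OF eval_Comp2[OF eval_ProjI[OF refl] eval_const_prog eval_bit_prog[OF refl]]
          eval_one_prog[OF refl]
          eval_Comp3[OF eval_Comp2[OF eval_ProjI[OF refl] eval_ProjI[OF refl] eval_bit_prog[OF refl]]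
            eval_Comp1[OF eval_ProjI[OF refl] p] eval_ZeroI[OF refl] eval_cond_prog[OF refl]]],
        rule eval_cond_prog)
       (simp add: finite_extension_def assms(2))
  define mem where "mem = Comp cond_prog [Comp parity_prog [Proj 1], Comp ext_prog [Comp half_prog [Proj 1], Proj 0],
      Comp Orc [Comp half_prog [Proj 1]]]"
  have "eval C mem [e, x] (if x \<in> join C (finite_extension F X e) then 1 else 0)" for e x
    unfolding mem_def
    by (rule eval_Comp3[OF eval_Comp1[OF eval_ProjI[OF refl] eval_parity_prog[OF refl]]
          eval_Comp2[OF eval_Comp1[OF eval_ProjI[OF refl] eval_half_prog[OF refl]] eval_ProjI[OF refl] ext]
          eval_Comp1[OF eval_Comp1[OF eval_ProjI[OF refl] eval_half_prog[OF refl]] eval_OrcI[OF refl]]],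
        rule eval_cond_prog)
       (auto simp: join_iff odd_iff_mod_2_eq_one)
  then show thesis by (rule that)
qed

lemma eval_join_finite_extension:
  assumes "eval (join C G) f xs y" "satisfies G F X"
  obtains e where "eval (join C (finite_extension F X e)) f xs y"
proof -
  obtain U where U: "finite U" "\<And>G'. G' \<inter> U = G \<inter> U \<Longrightarrow> eval (join C G') f xs y"
    using eval_join_finite_use[OF assms(1)] by blast
  have FG: "F \<subseteq> G" "G - F \<subseteq> X" using assms(2) unfolding satisfies_def by auto
  let ?e = "set_encode (G \<inter> U - F)"
  have "finite_extension F X ?e \<inter> U = G \<inter> U"
    using FG U(1) by (auto simp: finite_extension_def)
  then show thesis by (intro that U(2))
qed

lemma sigma1_formula_finite_extensions:
  assumes "sigma1_formula_param C m n \<phi>" "computable_in X C" "finite F"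
  shows "sigma1_formula C m n (\<lambda>V. \<exists>e. \<phi> (finite_extension F X e) V)"
proof -
  obtain f where f:
    "\<And>G V. finite_entries m n V \<Longrightarrow> \<phi> G V \<longleftrightarrow> (\<exists>y. eval (join C G) f [code_val m n V] y)"
    using assms(1) unfolding sigma1_formula_param_def by blast
  obtain mem where "\<And>e x. eval C mem [e, x] (if x \<in> join C (finite_extension F X e) then 1 else 0)"
    using computable_join_finite_extension[OF assms(2,3)] by blast
  from ex_eval_uniform_oracles[OF this] obtain g where
    "\<And>c. (\<exists>z. eval C g [c] z) \<longleftrightarrow> (\<exists>e y. eval (join C (finite_extension F X e)) f [c] y)"
    by blast
  then show ?thesis unfolding sigma1_formula_def using f by blast
qed

lemma sigma1_formula_param_finite_extension:
  assumes "sigma1_formula_param C m n \<phi>" "finite_entries m n V" "\<phi> G V" "satisfies G F X"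
  shows "\<exists>e. \<phi> (finite_extension F X e) V"
proof -
  obtain f where f: "\<And>G. \<phi> G V \<longleftrightarrow> (\<exists>y. eval (join C G) f [code_val m n V] y)"
    using assms(1,2) unfolding sigma1_formula_param_def by blast
  then obtain y where "eval (join C G) f [code_val m n V] y" using assms(3) by blast
  from eval_join_finite_extension[OF this assms(4)] show ?thesis using f by blast
qed

lemma computable_in_above:
  assumes "computable_in X C"
  shows "computable_in {x \<in> X. b < x} C"
proof -
  obtain p where p: "\<And>x. eval C p [x] (if x \<in> X then 1 else 0)"
    using assms unfolding computable_in_def by blast
  have "eval C (Comp cond_prog [Comp p [Proj 0], Comp sgn_prog [minus_const_prog b], Zero]) [x]
      (if x \<in> {x \<in> X. b < x} then 1 else 0)" for x
    by (rule eval_Comp3[OF eval_Comp1[OF eval_ProjI[OF refl] p]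
          eval_Comp1[OF eval_minus_const_prog eval_sgn_prog[OF refl]] eval_ZeroI[OF refl]],
        rule eval_cond_prog) auto
  then show ?thesis unfolding computable_in_def by blast
qed

lemma mathias_above_Max:
  assumes "finite E" "infinite X"
  shows "mathias E {x \<in> X. Max (insert 0 E) < x}"
proof -
  have "{x \<in> X. Max (insert 0 E) < x} = X - {..Max (insert 0 E)}" by auto
  then have "infinite {x \<in> X. Max (insert 0 E) < x}" using assms(2) by simp
  moreover have "a < b" if "a \<in> E" "Max (insert 0 E) < b" for a b
    using Max_ge[of "insert 0 E" a] assms(1) that by simp
  ultimately show ?thesis unfolding mathias_def using assms(1) by blast
qed

lemma essential_mono:
  assumes "essential m n M \<phi>" "\<And>V. is_valuation m n M V \<Longrightarrow> \<phi> V \<Longrightarrow> \<psi> V"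
  shows "essential m n M \<psi>"
  using assms unfolding essential_def by blast

lemma is_valuation_finite_entries: "is_valuation m n M V \<Longrightarrow> finite_entries m n V"
  unfolding is_valuation_def finite_entries_def by blast

theorem mainTheorem10:
  fixes n m :: nat and A0 A1 :: "str set" and C F X :: "nat set"
    and \<phi> :: "nat set \<Rightarrow> valuation \<Rightarrow> bool" and M :: matrix
  assumes "n \<ge> 1"
    and "fair n C A0 A1"
    and "mathias F X" and "computable_in X C"
    and "m \<ge> 1"
    and "sigma1_formula_param C m (2 ^ n * m) \<phi>"
    and "disjoint_matrix m (2 ^ n * m) M"
  shows "\<exists>E Y. mathias E Y \<and> mathias_ext E Y F X \<and> computable_in Y C \<and>
           ((\<forall>G. satisfies G E Y \<longrightarrow> \<not> essential m (2 ^ n * m) M (\<phi> G))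
            \<or> (\<exists>V. is_valuation m (2 ^ n * m) M V \<and> diagonalizes m (2 ^ n * m) V A0 A1 \<and> \<phi> E V))"
proof -
  let ?N = "2 ^ n * m"
  let ?\<psi> = "\<lambda>V. \<exists>e. \<phi> (finite_extension F X e) V"
  have F: "finite F" "infinite X" using assms(3) unfolding mathias_def by auto
  show ?thesis
  proof (cases "essential m ?N M ?\<psi>")
    case True
    with assms(2,7) sigma1_formula_finite_extensions[OF assms(6,4) F(1)]
    obtain V e where V: "is_valuation m ?N M V" "diagonalizes m ?N V A0 A1" "\<phi> (finite_extension F X e) V"
      unfolding fair_def by blast
    let ?E = "finite_extension F X e"
    let ?Y = "{x \<in> X. Max (insert 0 ?E) < x}"
    have "mathias ?E ?Y" using F by (intro mathias_above_Max) (simp_all add: finite_extension_def)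
    moreover have "mathias_ext ?E ?Y F X" by (auto simp: mathias_ext_def finite_extension_def)
    ultimately show ?thesis using V computable_in_above[OF assms(4)] by blast
  next
    case False
    have "\<not> essential m ?N M (\<phi> G)" if "satisfies G F X" for G
      using False essential_mono[of m ?N M "\<phi> G" ?\<psi>]
        sigma1_formula_param_finite_extension[OF assms(6) is_valuation_finite_entries _ that] by blast
    then show ?thesis using assms(3,4) by (auto simp: mathias_ext_def)
  qed
qed

end
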